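(* Let $d\ge 1$, $r\in(0,+\infty)$, let $\|\cdot\|$ be a norm on $\mathbb{R}^d$ and let $P$ be a Borel probability measure on $\mathbb{R}^d$ with $\int\|x\|^r\,dP(x)<+\infty$. Let $(a_n)_{n\ge1}$ be an $L^r$-optimal greedy quantization sequence for $P$ and $a^{(n)}=\{a_1,\dots,a_n\}$. Then, for every probability distribution $\nu$ on $(\mathbb{R}^d,\mathcal{B}(\mathbb{R}^d))$, every $c\in(0,\tfrac12)$ and every $n\ge1$, $$e_r(a^{(n)},P)^r-e_r(a^{(n+1)},P)^r\ \ge\ \frac{(1-c)^r-c^r}{(c+1)^r}\int \nu\Big(B\Big(x,\tfrac{c}{c+1}\,d(x,a^{(n)})\Big)\Big)\,d(x,a^{(n)})^r\,dP(x).$$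
   Context: For a finite nonempty set $\Gamma\subset\mathbb{R}^d$ and $x\in\mathbb{R}^d$, $d(x,\Gamma)=\min_{a\in\Gamma}\|x-a\|$ and $e_r(\Gamma,P)=\big(\int d(x,\Gamma)^r\,dP(x)\big)^{1/r}$. An $L^r$-optimal greedy quantization sequence for $P$ is a sequence $(a_n)_{n\ge1}$ in $\mathbb{R}^d$ such that, with $a^{(0)}=\varnothing$ and $a^{(n)}=\{a_1,\dots,a_n\}$, for every $n\ge0$, $a_{n+1}\in\operatorname{argmin}_{\xi\in\mathbb{R}^d} e_r(a^{(n)}\cup\{\xi\},P)$ (so $a_1$ is an $L^r$-median of $P$, i.e. a minimizer of $\xi\mapsto e_r(\{\xi\},P)$). $B(x,t)=\{y\in\mathbb{R}^d:\|y-x\|\le t\}$. *)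

theory Defs
  imports "HOL-Analysis.Analysis" "HOL-Probability.Probability"
begin

definition is_norm :: "('a::real_vector \<Rightarrow> real) \<Rightarrow> bool" where
  "is_norm N \<longleftrightarrow> (\<forall>x. 0 \<le> N x) \<and> (\<forall>x. N x = 0 \<longleftrightarrow> x = 0)
     \<and> (\<forall>x y. N (x + y) \<le> N x + N y) \<and> (\<forall>c x. N (c *\<^sub>R x) = \<bar>c\<bar> * N x)"

definition setdist_N :: "('a::real_vector \<Rightarrow> real) \<Rightarrow> 'a \<Rightarrow> 'a set \<Rightarrow> real" where
  "setdist_N N x \<Gamma> = Min ((\<lambda>a. N (x - a)) ` \<Gamma>)"

definition cball_N :: "('a::real_vector \<Rightarrow> real) \<Rightarrow> 'a \<Rightarrow> real \<Rightarrow> 'a set" where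
  "cball_N N x t = {y. N (y - x) \<le> t}"

definition quant_err :: "('a::real_vector \<Rightarrow> real) \<Rightarrow> real \<Rightarrow> 'a set \<Rightarrow> 'a measure \<Rightarrow> real" where
  "quant_err N r \<Gamma> P = (\<integral>x. setdist_N N x \<Gamma> powr r \<partial>P) powr (1 / r)"

text \<open>L^r-optimal greedy quantization sequence (indexed from 1; a^(n) = a ` {1..n}).\<close>
definition greedy_seq :: "('a::real_vector \<Rightarrow> real) \<Rightarrow> real \<Rightarrow> 'a measure \<Rightarrow> (nat \<Rightarrow> 'a) \<Rightarrow> bool" where
  "greedy_seq N r P a \<longleftrightarrow> (\<forall>n::nat. \<forall>\<xi>.
      quant_err N r (insert (a (Suc n)) (a ` {1..n})) P \<le> quant_err N r (insert \<xi> (a ` {1..n})) P)"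

end

theory Submission
  imports Defs
begin

(* Put G = a^(n) and rho = c/(c+1). By greedy optimality the actual gain
   e_r(a^(n),P)^r - e_r(a^(n+1),P)^r dominates the gain of adding any point xi to G.
   If xi lies in B(x, rho d(x,G)), adding it shrinks d(x,.)^r at least by the factor rho^r,
   so that gain is at least (1 - rho^r) * integral of 1{xi in B(x, rho d(x,G))} d(x,G)^r dP(x).
   Averaging over xi ~ nu and exchanging the integrals (Tonelli) turns the indicator into
   nu(B(x, rho d(x,G))). The constant 1 - rho^r obtained this way dominates
   ((1-c)^r - c^r)/(1+c)^r. *)

lemma is_norm_minus_commute:
  assumes "is_norm N"
  shows "N (x - y) = N (y - x)"
proof -
  have "N (x - y) = N ((-1) *\<^sub>R (y - x))" by simp
  also have "\<dots> = \<bar>-1\<bar> * N (y - x)" using assms unfolding is_norm_def by blast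
  finally show ?thesis by simp
qed

lemma is_norm_diff_le:
  assumes "is_norm N"
  shows "N (x - y) \<le> N x + N y"
proof -
  have "N (x + (- y)) \<le> N x + N (- y)" using assms unfolding is_norm_def by blast
  moreover have "N (- y) = N y" using is_norm_minus_commute[OF assms, of 0 y] by simp
  ultimately show ?thesis by simp
qed

lemma is_norm_sum_le:
  assumes "is_norm N" "finite S"
  shows "N (sum f S) \<le> (\<Sum>i\<in>S. N (f i))"
  using assms(2)
proof (induction S rule: finite_induct)
  case empty
  have "N 0 = 0" using assms(1) unfolding is_norm_def by blast
  then show ?case by simp
next
  case (insert x F)
  have "N (f x + sum f F) \<le> N (f x) + N (sum f F)" using assms(1) unfolding is_norm_def by blast
  then show ?case using insert by simp
qed

lemma is_norm_le_norm:
  fixes N :: "'a::euclidean_space \<Rightarrow> real"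
  assumes "is_norm N"
  shows "N x \<le> (\<Sum>b\<in>Basis. N b) * norm x"
proof -
  have "N x = N (\<Sum>b\<in>Basis. (x \<bullet> b) *\<^sub>R b)" by (simp add: euclidean_representation)
  also have "\<dots> \<le> (\<Sum>b\<in>Basis. N ((x \<bullet> b) *\<^sub>R b))" by (rule is_norm_sum_le[OF assms]) simp
  also have "\<dots> = (\<Sum>b\<in>Basis. \<bar>x \<bullet> b\<bar> * N b)" using assms unfolding is_norm_def by simp
  also have "\<dots> \<le> (\<Sum>b\<in>Basis. norm x * N b)"
    using Basis_le_norm assms unfolding is_norm_def by (intro sum_mono mult_right_mono) auto
  finally show ?thesis by (simp add: sum_distrib_left mult.commute)
qed

lemma is_norm_lipschitz:
  fixes N :: "'a::euclidean_space \<Rightarrow> real"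
  assumes "is_norm N"
  shows "(\<Sum>b\<in>Basis. N b)-lipschitz_on UNIV N"
proof (rule lipschitz_onI)
  fix x y :: 'a
  have "N x \<le> N (x - y) + N y" "N y \<le> N (y - x) + N x"
    using assms unfolding is_norm_def by (metis diff_add_cancel)+
  then have "\<bar>N x - N y\<bar> \<le> N (x - y)" using is_norm_minus_commute[OF assms, of x y] by linarith
  then show "dist (N x) (N y) \<le> (\<Sum>b\<in>Basis. N b) * dist x y"
    using is_norm_le_norm[OF assms, of "x - y"] by (simp add: dist_real_def dist_norm)
  show "0 \<le> (\<Sum>b\<in>Basis. N b)" using assms unfolding is_norm_def by (simp add: sum_nonneg)
qed

lemma borel_measurable_is_norm:
  fixes N :: "'a::euclidean_space \<Rightarrow> real"
  assumes "is_norm N"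
  shows "N \<in> borel_measurable borel"
  by (rule borel_measurable_continuous_onI lipschitz_on_continuous_on is_norm_lipschitz assms)+

lemma
  assumes "is_norm N" "finite G" "G \<noteq> {}"
  shows setdist_N_nonneg: "0 \<le> setdist_N N x G"
    and setdist_N_le: "g \<in> G \<Longrightarrow> setdist_N N x G \<le> N (x - g)"
    and setdist_N_insert: "setdist_N N x (insert \<xi> G) = min (N (x - \<xi>)) (setdist_N N x G)"
proof -
  have "setdist_N N x G \<in> (\<lambda>a. N (x - a)) ` G"
    unfolding setdist_N_def using assms by (intro Min_in) auto
  then show "0 \<le> setdist_N N x G" using assms(1) unfolding is_norm_def by auto
  show "g \<in> G \<Longrightarrow> setdist_N N x G \<le> N (x - g)"
    unfolding setdist_N_def using assms by (intro Min_le) auto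
  show "setdist_N N x (insert \<xi> G) = min (N (x - \<xi>)) (setdist_N N x G)"
    unfolding setdist_N_def using assms by simp
qed

lemma borel_measurable_setdist_N:
  fixes N :: "'a::euclidean_space \<Rightarrow> real"
  assumes "is_norm N" "finite G"
  shows "(\<lambda>x. setdist_N N x G) \<in> borel_measurable borel"
  using borel_measurable_is_norm[OF assms(1), measurable] assms(2)
  unfolding setdist_N_def by measurable

lemma powr_add_le_two_powr:
  fixes u v r :: real
  assumes "0 \<le> u" "0 \<le> v" "0 < r"
  shows "(u + v) powr r \<le> 2 powr r * (u powr r + v powr r)"
proof -
  have "(u + v) powr r \<le> (2 * max u v) powr r"
    using assms by (intro powr_mono2) auto
  also have "\<dots> = 2 powr r * max u v powr r" using assms by (simp add: powr_mult)
  also have "max u v powr r \<le> u powr r + v powr r"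
    by (cases "u \<le> v") (auto simp: max_def)
  finally show ?thesis by simp
qed

lemma integrable_setdist_N_powr:
  fixes N :: "'a::euclidean_space \<Rightarrow> real"
  assumes N: "is_norm N" and G: "finite G" "G \<noteq> {}" and "0 < r"
    and P: "prob_space P" "sets P = sets borel"
    and moment: "(\<integral>\<^sup>+ x. ennreal (N x powr r) \<partial>P) < \<infinity>"
  shows "integrable P (\<lambda>x. setdist_N N x G powr r)"
proof -
  interpret prob_space P by fact
  have measurable_P: "borel_measurable P = borel_measurable borel"
    using P(2) by (intro measurable_cong_sets) auto
  note [measurable] = borel_measurable_is_norm[OF N] borel_measurable_setdist_N[OF N G(1)]
  obtain g where g: "g \<in> G" using G(2) by blast
  have bound: "setdist_N N x G powr r \<le> 2 powr r * (N x powr r + N g powr r)" for x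
  proof -
    have "setdist_N N x G \<le> N x + N g"
      using setdist_N_le[OF N G g] is_norm_diff_le[OF N] order_trans by blast
    then have "setdist_N N x G powr r \<le> (N x + N g) powr r"
      using setdist_N_nonneg[OF N G] \<open>0 < r\<close> by (intro powr_mono2) auto
    also have "\<dots> \<le> 2 powr r * (N x powr r + N g powr r)"
      using N \<open>0 < r\<close> by (intro powr_add_le_two_powr) (auto simp: is_norm_def)
    finally show ?thesis .
  qed
  have "integrable P (\<lambda>x. N x powr r)"
    using moment by (intro integrableI_bounded) (simp_all add: measurable_P)
  then have "integrable P (\<lambda>x. 2 powr r * (N x powr r + N g powr r))" by simp
  moreover have "(\<lambda>x. setdist_N N x G powr r) \<in> borel_measurable P"
    unfolding measurable_P by measurable
  moreover have "AE x in P. norm (setdist_N N x G powr r) \<le> norm (2 powr r * (N x powr r + N g powr r))"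
    using bound by (intro AE_I2) (simp add: order_trans[OF _ abs_ge_self])
  ultimately show ?thesis by (rule Bochner_Integration.integrable_bound)
qed

lemma quant_err_powr:
  assumes "0 < r"
  shows "quant_err N r G P powr r = (\<integral>x. setdist_N N x G powr r \<partial>P)"
proof -
  have "0 \<le> (\<integral>x. setdist_N N x G powr r \<partial>P)" by (rule Bochner_Integration.integral_nonneg) simp
  then show ?thesis unfolding quant_err_def powr_powr using assms by simp
qed

lemma greedy_seq_insert_le:
  assumes "greedy_seq N r P a" "0 < r"
  shows "(\<integral>x. setdist_N N x (a ` {1..Suc n}) powr r \<partial>P)
           \<le> (\<integral>x. setdist_N N x (insert \<xi> (a ` {1..n})) powr r \<partial>P)"
proof -
  have "a ` {1..Suc n} = insert (a (Suc n)) (a ` {1..n})" by (auto simp: atLeastAtMostSuc_conv)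
  then have "quant_err N r (a ` {1..Suc n}) P \<le> quant_err N r (insert \<xi> (a ` {1..n})) P"
    using assms(1) unfolding greedy_seq_def by simp
  then have "quant_err N r (a ` {1..Suc n}) P powr r \<le> quant_err N r (insert \<xi> (a ` {1..n})) P powr r"
    using assms(2) by (intro powr_mono2) (auto simp: quant_err_def)
  then show ?thesis using assms(2) by (simp add: quant_err_powr)
qed

lemma setdist_N_insert_powr_gain:
  assumes N: "is_norm N" and G: "finite G" "G \<noteq> {}" and "0 < r" "0 \<le> \<rho>"
  shows "(1 - \<rho> powr r) * setdist_N N x G powr r * indicator (cball_N N x (\<rho> * setdist_N N x G)) \<xi>
           \<le> setdist_N N x G powr r - setdist_N N x (insert \<xi> G) powr r"
proof (cases "\<xi> \<in> cball_N N x (\<rho> * setdist_N N x G)")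
  case True
  then have "setdist_N N x (insert \<xi> G) \<le> \<rho> * setdist_N N x G"
    using is_norm_minus_commute[OF N, of x \<xi>]
    by (simp add: setdist_N_insert[OF N G] cball_N_def)
  then have "setdist_N N x (insert \<xi> G) powr r \<le> (\<rho> * setdist_N N x G) powr r"
    using setdist_N_nonneg[of N "insert \<xi> G"] N G \<open>0 < r\<close> by (intro powr_mono2) auto
  also have "\<dots> = \<rho> powr r * setdist_N N x G powr r"
    using setdist_N_nonneg[OF N G] \<open>0 \<le> \<rho>\<close> by (simp add: powr_mult)
  finally show ?thesis using True by (simp add: algebra_simps)
next
  case False
  have "setdist_N N x (insert \<xi> G) powr r \<le> setdist_N N x G powr r"
    using setdist_N_nonneg[of N "insert \<xi> G"] setdist_N_nonneg[of N G] N G \<open>0 < r\<close>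
    by (intro powr_mono2) (auto simp: setdist_N_insert[OF N G])
  then show ?thesis using False by simp
qed

lemma nn_integral_mixture_le:
  fixes f :: "'b \<Rightarrow> 'c \<Rightarrow> ennreal"
  assumes "sigma_finite_measure M" "prob_space \<nu>"
    and f: "case_prod f \<in> borel_measurable (\<nu> \<Otimes>\<^sub>M M)"
    and bound: "\<And>\<xi>. \<xi> \<in> space \<nu> \<Longrightarrow> (\<integral>\<^sup>+x. f \<xi> x \<partial>M) \<le> B"
  shows "(\<integral>\<^sup>+x. (\<integral>\<^sup>+\<xi>. f \<xi> x \<partial>\<nu>) \<partial>M) \<le> B"
proof -
  interpret \<nu>: prob_space \<nu> by fact
  interpret pair_sigma_finite \<nu> M
    using assms(1) \<nu>.sigma_finite_measure_axioms by (simp add: pair_sigma_finite_def)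
  have "(\<integral>\<^sup>+x. (\<integral>\<^sup>+\<xi>. f \<xi> x \<partial>\<nu>) \<partial>M) = (\<integral>\<^sup>+\<xi>. (\<integral>\<^sup>+x. f \<xi> x \<partial>M) \<partial>\<nu>)"
    by (rule Fubini'[OF f])
  also have "\<dots> \<le> (\<integral>\<^sup>+\<xi>. B \<partial>\<nu>)" using bound by (intro nn_integral_mono)
  also have "\<dots> = B" by (simp add: \<nu>.emeasure_space_1)
  finally show ?thesis .
qed

lemma integral_ball_mass_le_insert_gain:
  fixes N :: "'a::euclidean_space \<Rightarrow> real"
  assumes N: "is_norm N" and r: "0 < r"
    and P: "prob_space P" "sets P = sets borel"
    and moment: "(\<integral>\<^sup>+ x. ennreal (N x powr r) \<partial>P) < \<infinity>"
    and \<nu>: "prob_space \<nu>" "sets \<nu> = sets borel"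
    and G: "finite G" "G \<noteq> {}" and \<rho>: "0 \<le> \<rho>" "\<rho> \<le> 1"
    and gain: "\<And>\<xi>. (\<integral>x. setdist_N N x G powr r \<partial>P)
                      - (\<integral>x. setdist_N N x (insert \<xi> G) powr r \<partial>P) \<le> \<Delta>"
  shows "(1 - \<rho> powr r) *
           (\<integral>x. measure \<nu> (cball_N N x (\<rho> * setdist_N N x G)) * setdist_N N x G powr r \<partial>P) \<le> \<Delta>"
proof -
  interpret P: prob_space P by fact
  interpret \<nu>: prob_space \<nu> by fact
  define D where "D x = setdist_N N x G" for x
  define K where "K = 1 - \<rho> powr r"
  define f where "f \<xi> x = ennreal (K * D x powr r * indicator (cball_N N x (\<rho> * D x)) \<xi>)" for \<xi> x
  note [measurable] = borel_measurable_is_norm[OF N]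
  have [measurable]: "D \<in> borel_measurable borel"
    unfolding D_def using borel_measurable_setdist_N[OF N G(1)] .
  have K: "0 \<le> K" unfolding K_def using \<rho> r by (simp add: powr_le1)
  have "0 \<le> \<Delta>" using gain[of "SOME g. g \<in> G"] G(2) by (simp add: insert_absorb some_in_eq)
  have section_bound: "(\<integral>\<^sup>+x. f \<xi> x \<partial>P) \<le> ennreal \<Delta>" for \<xi>
  proof -
    let ?gain = "\<lambda>x. D x powr r - setdist_N N x (insert \<xi> G) powr r"
    have pointwise: "K * D x powr r * indicator (cball_N N x (\<rho> * D x)) \<xi> \<le> ?gain x" for x
      unfolding K_def D_def using setdist_N_insert_powr_gain[OF N G r \<rho>(1)] .
    have integrable: "integrable P (\<lambda>x. setdist_N N x H powr r)" if "finite H" "H \<noteq> {}" for H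
      using integrable_setdist_N_powr[OF N that r P moment] .
    have "(\<integral>\<^sup>+x. f \<xi> x \<partial>P) \<le> (\<integral>\<^sup>+x. ennreal (?gain x) \<partial>P)"
      unfolding f_def using pointwise by (intro nn_integral_mono ennreal_leI)
    also have "\<dots> = ennreal (\<integral>x. ?gain x \<partial>P)"
    proof (rule nn_integral_eq_integral)
      show "integrable P ?gain"
        using integrable[OF G] integrable[of "insert \<xi> G"] G by (simp add: D_def)
      have "0 \<le> K * D x powr r * indicator (cball_N N x (\<rho> * D x)) \<xi>" for x
        using K by simp
      then show "AE x in P. 0 \<le> ?gain x"
        using pointwise by (intro AE_I2) (rule order_trans)
    qed
    also have "\<dots> \<le> ennreal \<Delta>"
      using gain[of \<xi>] integrable G by (intro ennreal_leI) (simp add: D_def)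
    finally show ?thesis .
  qed
  have "case_prod f \<in> borel_measurable (\<nu> \<Otimes>\<^sub>M P)"
  proof -
    have borel_pair: "borel_measurable (\<nu> \<Otimes>\<^sub>M P) = borel_measurable (borel \<Otimes>\<^sub>M borel)"
      using P(2) \<nu>(2) by (intro measurable_cong_sets sets_pair_measure_cong) auto
    show ?thesis unfolding borel_pair f_def cball_N_def indicator_def by measurable
  qed
  then have "(\<integral>\<^sup>+x. (\<integral>\<^sup>+\<xi>. f \<xi> x \<partial>\<nu>) \<partial>P) \<le> ennreal \<Delta>"
    using section_bound by (intro nn_integral_mixture_le P.sigma_finite_measure_axioms \<nu>(1))
  moreover have "(\<integral>\<^sup>+\<xi>. f \<xi> x \<partial>\<nu>) = ennreal (K * (measure \<nu> (cball_N N x (\<rho> * D x)) * D x powr r))" for x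
  proof -
    have ball: "cball_N N x (\<rho> * D x) \<in> sets \<nu>"
      unfolding \<nu>(2) cball_N_def by measurable
    have "(\<integral>\<^sup>+\<xi>. f \<xi> x \<partial>\<nu>)
        = (\<integral>\<^sup>+\<xi>. ennreal (K * D x powr r) * indicator (cball_N N x (\<rho> * D x)) \<xi> \<partial>\<nu>)"
      unfolding f_def by (intro nn_integral_cong) (simp add: indicator_def)
    also have "\<dots> = ennreal (K * D x powr r) * emeasure \<nu> (cball_N N x (\<rho> * D x))"
      using ball by (rule nn_integral_cmult_indicator)
    also have "\<dots> = ennreal (K * (measure \<nu> (cball_N N x (\<rho> * D x)) * D x powr r))"
      unfolding \<nu>.emeasure_eq_measure using K
      by (subst ennreal_mult[symmetric]) (simp_all add: mult_ac)
    finally show ?thesis .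
  qed
  ultimately have "(\<integral>x. K * (measure \<nu> (cball_N N x (\<rho> * D x)) * D x powr r) \<partial>P) \<le> \<Delta>"
    using \<open>0 \<le> \<Delta>\<close> by (intro integral_real_bounded) simp_all
  then show ?thesis by (simp only: integral_mult_right_zero K_def D_def)
qed

lemma powr_diff_div_le_one_minus_powr:
  fixes c r :: real
  assumes "0 \<le> c" "c \<le> 1" "0 \<le> r"
  shows "((1 - c) powr r - c powr r) / (c + 1) powr r \<le> 1 - (c / (c + 1)) powr r"
proof -
  have "(1 - c) powr r \<le> (c + 1) powr r" using assms by (intro powr_mono2) auto
  then have "((1 - c) powr r - c powr r) / (c + 1) powr r \<le> ((c + 1) powr r - c powr r) / (c + 1) powr r"
    by (intro divide_right_mono) auto
  also have "\<dots> = 1 - (c / (c + 1)) powr r"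
    using assms by (simp add: powr_divide diff_divide_distrib)
  finally show ?thesis .
qed

theorem proposition2p1:
  fixes N :: "'a::euclidean_space \<Rightarrow> real"
    and r :: real and P \<nu> :: "'a measure" and a :: "nat \<Rightarrow> 'a"
  assumes "is_norm N" and "0 < r"
    and "prob_space P" and "sets P = sets borel"
    and "(\<integral>\<^sup>+ x. ennreal (N x powr r) \<partial>P) < \<infinity>"
    and "greedy_seq N r P a"
    and "prob_space \<nu>" and "sets \<nu> = sets borel"
    and "0 < c" and "c < 1 / 2"
    and "1 \<le> n"
  shows "quant_err N r (a ` {1..n}) P powr r - quant_err N r (a ` {1..Suc n}) P powr r
     \<ge> ((1 - c) powr r - c powr r) / (c + 1) powr r *
        (\<integral>x. measure \<nu> (cball_N N x (c / (c + 1) * setdist_N N x (a ` {1..n})))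
               * setdist_N N x (a ` {1..n}) powr r \<partial>P)"
proof -
  define G where "G = a ` {1..n}"
  define E where "E H = (\<integral>x. setdist_N N x H powr r \<partial>P)" for H
  define I where "I = (\<integral>x. measure \<nu> (cball_N N x (c / (c + 1) * setdist_N N x G))
                          * setdist_N N x G powr r \<partial>P)"
  have G: "finite G" "G \<noteq> {}" using \<open>1 \<le> n\<close> by (auto simp: G_def)
  have "E G - E (insert \<xi> G) \<le> E G - E (a ` {1..Suc n})" for \<xi>
    using greedy_seq_insert_le[OF assms(6,2)] unfolding E_def G_def by (simp add: algebra_simps)
  then have gain: "(1 - (c / (c + 1)) powr r) * I \<le> E G - E (a ` {1..Suc n})"
    unfolding I_def E_def using assms(9)
    by (intro integral_ball_mass_le_insert_gain[OF assms(1-5,7,8) G]) auto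
  have "0 \<le> I" unfolding I_def by (intro Bochner_Integration.integral_nonneg) simp
  then have "((1 - c) powr r - c powr r) / (c + 1) powr r * I \<le> (1 - (c / (c + 1)) powr r) * I"
    using assms(2,9,10) by (intro mult_right_mono powr_diff_div_le_one_minus_powr) auto
  also note gain
  also have "E G - E (a ` {1..Suc n}) = quant_err N r G P powr r - quant_err N r (a ` {1..Suc n}) P powr r"
    using assms(2) by (simp add: quant_err_powr E_def)
  finally show ?thesis by (simp only: G_def I_def)
qed

end
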